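(* Let $M$ be an $m$-dimensional manifold without boundary, $f:M\to\mathbb R^n$ ($n=m+k$) an $(r,\lambda)$-immersion with $r>0$ and $0<\lambda\le\frac{1}{8\sqrt m}$. Let $q\in M$, let $A_q$ be an admissible Euclidean isometry for $q$, and put $\varphi_q:=\pi\circ A_q^{-1}\circ f:M\to\mathbb R^m$. Then for every $p\in U_{r,q}$, $$B_{\frac45 r}(\varphi_q(p))\subset\varphi_q(U_{r,p}).$$
   Context: For $q\in M$ let $\tau_f(q)\subset\mathbb R^n$ denote the $m$-dimensional linear subspace $f_*(T_qM)$. $B_\varrho$ denotes the open ball of radius $\varrho$ in $\mathbb R^m$ centered at $0$, and $B_\varrho(x)$ the one centered at $x$. A Euclidean isometry is a map $A(x)=Rx+T$ with $R\in SO(n)$, $T\in\mathbb R^n$; it is admissible for $q\in M$ if $A(0)=f(q)$ and $A$ maps $\mathbb R^m\times\{0\}\subset\mathbb R^m\times\mathbb R^k$ onto $f(q)+\tau_f(q)$; $A_q$ denotes such an isometry. Let $\pi:\mathbb R^m\times\mathbb R^k\to\mathbb R^m$ be the projection onto the first $m$ coordinates. For $r>0$ let $U_{r,q}\subset M$ be the connected component containing $q$ of $(\pi\circ A_q^{-1}\circ f)^{-1}(B_r)$ (independent of the choice of $A_q$). For $A=(a_1,\dots,a_m)\in\mathbb R^{k\times m}$ we use $\|A\|=(\sum_j|a_j|^2)^{1/2}$ and $\|Du\|_{C^0(B_r)}=\sup_{x\in B_r}\|Du(x)\|$. The immersion $f$ is an $(r,\lambda)$-immersion if for every $q\in M$ the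 set $A_q^{-1}\circ f(U_{r,q})$ equals $\{(x,u(x)):x\in B_r\}$ for a differentiable function $u:B_r\to\mathbb R^k$ with $\|Du\|_{C^0(B_r)}\le\lambda$. *)

theory Defs
  imports "HOL-Analysis.Analysis"
begin

text \<open>The manifold M is the whole carrier of a Hausdorff, second countable
  topological type 'a, equipped with a C^1 atlas of charts onto open subsets of R^m (so M has
  no boundary). R^m is real^'m, R^k is real^'k and R^n = R^m x R^k is real^('m + 'k), with
  coordinates Inl i (first m) and Inr j (last k).\<close>

definition C1_on :: "('b::euclidean_space \<Rightarrow> 'c::real_normed_vector) \<Rightarrow> 'b set \<Rightarrow> bool" where
  "C1_on g S \<longleftrightarrow> (\<exists>G. (\<forall>x\<in>S. (g has_derivative blinfun_apply (G x)) (at x)) \<and> continuous_on S G)"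

definition is_chart :: "'a::topological_space set \<Rightarrow> ('a \<Rightarrow> real^'m) \<Rightarrow> bool" where
  "is_chart U \<psi> \<longleftrightarrow> open U \<and> open (\<psi> ` U) \<and> (\<exists>g. homeomorphism U (\<psi> ` U) \<psi> g)"

definition C1_manifold :: "('a::{t2_space,second_countable_topology} set \<times> ('a \<Rightarrow> real^'m)) set \<Rightarrow> bool" where
  "C1_manifold atlas \<longleftrightarrow>
     (\<forall>c\<in>atlas. is_chart (fst c) (snd c)) \<and> \<Union>(fst ` atlas) = UNIV \<and>
     (\<forall>c\<in>atlas. \<forall>d\<in>atlas. C1_on (snd d \<circ> inv_into (fst c) (snd c)) (snd c ` (fst c \<inter> fst d)))"

definition immersion :: "('a::topological_space set \<times> ('a \<Rightarrow> real^'m)) set \<Rightarrow> ('a \<Rightarrow> 'c::euclidean_space) \<Rightarrow> bool" where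
  "immersion atlas f \<longleftrightarrow>
     (\<forall>c\<in>atlas. C1_on (f \<circ> inv_into (fst c) (snd c)) (snd c ` fst c) \<and>
        (\<forall>x\<in>snd c ` fst c. inj (frechet_derivative (f \<circ> inv_into (fst c) (snd c)) (at x))))"

text \<open>tau_f(q) = f_*(T_q M), computed in some chart around q (independent of the chart).\<close>
definition tau :: "('a::topological_space set \<times> ('a \<Rightarrow> real^'m)) set \<Rightarrow> ('a \<Rightarrow> 'c::euclidean_space) \<Rightarrow> 'a \<Rightarrow> 'c set" where
  "tau atlas f q = (let c = (SOME c. c \<in> atlas \<and> q \<in> fst c) in
      range (frechet_derivative (f \<circ> inv_into (fst c) (snd c)) (at (snd c q))))"

definition proj1 :: "real^('m::finite + 'k::finite) \<Rightarrow> real^'m" where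
  "proj1 y = (\<chi> i. y $ Inl i)"

definition proj2 :: "real^('m::finite + 'k::finite) \<Rightarrow> real^'k" where
  "proj2 y = (\<chi> j. y $ Inr j)"

definition flat :: "(real^('m::finite + 'k::finite)) set" where
  "flat = {y. \<forall>j. y $ Inr j = 0}"

text \<open>Euclidean isometry A(x) = R x + T with R in SO(n), and its inverse.\<close>
definition SO :: "(real^'n^'n) set" where
  "SO = {R. orthogonal_matrix R \<and> det R = 1}"

definition iso_inv :: "real^'n^'n \<Rightarrow> real^'n \<Rightarrow> real^'n \<Rightarrow> real^'n" where
  "iso_inv R T y = transpose R *v (y - T)"

definition admissible ::
  "('a::topological_space set \<times> ('a \<Rightarrow> real^'m)) set \<Rightarrow> ('a \<Rightarrow> real^('m::finite + 'k::finite)) \<Rightarrow> 'a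
     \<Rightarrow> real^('m+'k)^('m+'k) \<Rightarrow> real^('m+'k) \<Rightarrow> bool" where
  "admissible atlas f q R T \<longleftrightarrow> R \<in> SO \<and> R *v 0 + T = f q \<and>
     (\<lambda>x. R *v x + T) ` flat = (\<lambda>v. f q + v) ` tau atlas f q"

definition phi :: "('a \<Rightarrow> real^('m::finite + 'k::finite)) \<Rightarrow> real^('m+'k)^('m+'k) \<Rightarrow> real^('m+'k) \<Rightarrow> 'a \<Rightarrow> real^'m" where
  "phi f R T = proj1 \<circ> iso_inv R T \<circ> f"

definition Ucomp :: "('a::topological_space \<Rightarrow> real^('m::finite + 'k::finite)) \<Rightarrow> real^('m+'k)^('m+'k) \<Rightarrow> real^('m+'k)
     \<Rightarrow> real \<Rightarrow> 'a \<Rightarrow> 'a set" where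
  "Ucomp f R T r q = connected_component_set (phi f R T -` ball 0 r) q"

definition frob :: "(real^'m \<Rightarrow> real^'k) \<Rightarrow> real" where
  "frob L = sqrt (\<Sum>j\<in>UNIV. (norm (L (axis j 1)))^2)"

definition r_lambda_immersion ::
  "('a::topological_space set \<times> ('a \<Rightarrow> real^'m)) set \<Rightarrow> ('a \<Rightarrow> real^('m::finite + 'k::finite)) \<Rightarrow> real \<Rightarrow> real \<Rightarrow> bool" where
  "r_lambda_immersion atlas f r lam \<longleftrightarrow>
     immersion atlas f \<and>
     (\<forall>q R T. admissible atlas f q R T \<longrightarrow>
        (\<exists>u :: real^'m \<Rightarrow> real^'k.
           u differentiable_on ball 0 r \<and>
           (\<forall>x\<in>ball 0 r. frob (frechet_derivative u (at x)) \<le> lam) \<and>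
           iso_inv R T ` f ` Ucomp f R T r q = {y. proj1 y \<in> ball 0 r \<and> proj2 y = u (proj1 y)}))"

end

theory Submission
  imports Defs
begin

text \<open>
  Fix p in U_{r,q} and an admissible isometry A_p = (R', T'). In the frame of A_q
  the image of U_{r,q} is the graph of u, and in the frame of A_p the image of U_{r,p} is the
  graph of v, with v 0 = 0 and v lam-Lipschitz. The rotation Q = R^T R' relating the two frames
  maps R^m x {0} (the tangent plane at p in the frame of A_p) onto the tangent plane of the
  graph of u at phi_q p, i.e. onto the graph of the linear map L = Du(phi_q p), |L| <= lam.
  Writing the first component of Q(y, w) as horiz y + shear w, the map horiz is invertible
  with |horiz^-1| <= 1 + lam^2 and |shear| <= lam. For |z| < 4r/5 and lam <= 1/8 the equation
  horiz y + shear (v y) = z is solved by a contraction on the ball of radius 9r/10, giving a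
  point of U_{r,p} whose image under phi_q is phi_q p + z.
\<close>

definition pair :: "real^'m \<Rightarrow> real^'k \<Rightarrow> real^('m::finite + 'k::finite)" where
  "pair a b = (\<chi> i. case i of Inl j \<Rightarrow> a $ j | Inr j \<Rightarrow> b $ j)"

lemma proj1_pair [simp]: "proj1 (pair a b) = a"
  by (simp add: proj1_def pair_def vec_eq_iff)

lemma proj2_pair [simp]: "proj2 (pair a b) = b"
  by (simp add: proj2_def pair_def vec_eq_iff)

lemma pair_add: "pair a b + pair a' b' = pair (a + a') (b + b')"
  by (simp add: pair_def vec_eq_iff split: sum.split)

lemma pair_scaleR: "c *\<^sub>R pair a b = pair (c *\<^sub>R a) (c *\<^sub>R b)"
  by (simp add: pair_def vec_eq_iff split: sum.split)

lemma linear_pair_left: "linear (\<lambda>a. pair a 0)"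
  by (simp add: linear_iff pair_add pair_scaleR)

lemma linear_pair_right: "linear (\<lambda>b. pair 0 b)"
  by (simp add: linear_iff pair_add pair_scaleR)

lemma pair_in_flat: "pair a 0 \<in> flat"
  by (simp add: pair_def flat_def)

lemma proj1_zero [simp]: "proj1 0 = 0"
  by (simp add: proj1_def vec_eq_iff)

lemma proj2_zero [simp]: "proj2 0 = 0"
  by (simp add: proj2_def vec_eq_iff)

lemma linear_proj1: "linear proj1"
  by (simp add: linear_iff proj1_def vec_eq_iff)

lemma linear_proj2: "linear proj2"
  by (simp add: linear_iff proj2_def vec_eq_iff)

lemma inner_split: "inner x y = inner (proj1 x) (proj1 y) + inner (proj2 x) (proj2 y)"
proof -
  have "inner x y = (\<Sum>i\<in>Inl ` UNIV \<union> Inr ` UNIV. x$i * y$i)"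
    by (simp add: inner_vec_def UNIV_sum[symmetric])
  also have "\<dots> = (\<Sum>i\<in>Inl ` UNIV. x$i * y$i) + (\<Sum>i\<in>Inr ` UNIV. x$i * y$i)"
    by (rule sum.union_disjoint) auto
  finally show ?thesis
    by (simp add: sum.reindex inner_vec_def proj1_def proj2_def)
qed

lemma norm_split: "(norm x)^2 = (norm (proj1 x))^2 + (norm (proj2 x))^2"
  by (simp add: power2_norm_eq_inner inner_split[of x x])

lemma norm_proj2_le: "norm (proj2 x) \<le> norm x"
  using norm_split[of x] by (simp add: power2_le_imp_le)

lemma frob_bound:
  fixes L :: "real^'m \<Rightarrow> real^'k"
  assumes "linear L"
  shows "norm (L a) \<le> frob L * norm a"
proof -
  have "L a = (\<Sum>j\<in>UNIV. (a$j) *\<^sub>R L (axis j 1))"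
    using basis_expansion[of a] assms
    by (metis (no_types, lifting) linear_scale linear_sum scalar_mult_eq_scaleR sum.cong)
  then have "norm (L a) \<le> (\<Sum>j\<in>UNIV. \<bar>a$j\<bar> * norm (L (axis j 1)))"
    by (metis (no_types, lifting) norm_scaleR norm_sum sum.cong)
  also have "\<dots> = inner (\<chi> j. \<bar>a$j\<bar>) (\<chi> j. norm (L (axis j 1)))"
    by (simp add: inner_vec_def)
  also have "\<dots> \<le> norm (\<chi> j. \<bar>a$j\<bar>) * norm (\<chi> j. norm (L (axis j 1)) :: real^'m)"
    by (rule norm_cauchy_schwarz)
  also have "\<dots> = norm a * frob L"
    by (simp add: norm_vec_def frob_def L2_set_def)
  finally show ?thesis by (simp add: mult.commute)
qed

lemma frob_derivative_lipschitz:
  fixes v :: "real^'m::finite \<Rightarrow> real^'k::finite"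
  assumes S: "open S" "convex S" and v: "v differentiable_on S"
    and bound: "\<And>x. x \<in> S \<Longrightarrow> frob (frechet_derivative v (at x)) \<le> lam"
    and y: "y \<in> S" "y' \<in> S"
  shows "norm (v y - v y') \<le> lam * norm (y - y')"
proof (rule differentiable_bound[OF S(2) _ _ y])
  fix x assume x: "x \<in> S"
  then have deriv: "(v has_derivative frechet_derivative v (at x)) (at x)"
    using v S(1) by (simp add: differentiable_on_eq_differentiable_at frechet_derivative_works[symmetric])
  then show "(v has_derivative frechet_derivative v (at x)) (at x within S)"
    by (rule has_derivative_at_withinI)
  show "onorm (frechet_derivative v (at x)) \<le> lam"
  proof (rule onorm_le)
    fix w
    show "norm (frechet_derivative v (at x) w) \<le> lam * norm w"
      using frob_bound[OF has_derivative_linear[OF deriv], of w] bound[OF x]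
      by (meson mult_right_mono norm_ge_zero order_trans)
  qed
qed

text \<open>In the application Q = R^T R' compares the frames of two
  admissible isometries A_q and A_p.\<close>
locale tilted_frame =
  fixes Q :: "real^('m::finite + 'k::finite) \<Rightarrow> real^('m + 'k)"
    and L :: "real^'m \<Rightarrow> real^'k" and lam :: real
  assumes orth: "orthogonal_transformation Q"
    and linear_L: "linear L"
    and frob_L: "frob L \<le> lam"
    and graph: "\<And>y. proj2 (Q (pair y 0)) = L (proj1 (Q (pair y 0)))"
begin

definition horiz :: "real^'m \<Rightarrow> real^'m" where
  "horiz y = proj1 (Q (pair y 0))"

definition shear :: "real^'k \<Rightarrow> real^'m" where
  "shear w = proj1 (Q (pair 0 w))"

lemma lam_nonneg: "0 \<le> lam"
proof -
  have "0 \<le> frob L" unfolding frob_def by (simp add: sum_nonneg)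
  then show ?thesis using frob_L by linarith
qed

lemma L_bound: "norm (L a) \<le> lam * norm a"
  using frob_bound[OF linear_L, of a] frob_L by (meson mult_right_mono norm_ge_zero order_trans)

lemma linear_Q: "linear Q"
  using orth orthogonal_transformation_linear by blast

lemma proj1_Q_pair: "proj1 (Q (pair y w)) = horiz y + shear w"
proof -
  have "Q (pair y w) = Q (pair y 0) + Q (pair 0 w)"
    using linear_add[OF linear_Q, of "pair y 0" "pair 0 w"] pair_add[of y 0 0 w] by simp
  then show ?thesis
    by (simp add: horiz_def shear_def linear_add[OF linear_proj1])
qed

lemma linear_horiz: "linear horiz"
  using linear_compose[OF linear_compose[OF linear_pair_left linear_Q] linear_proj1]
  by (simp add: horiz_def[abs_def] o_def)

lemma linear_shear: "linear shear"
  using linear_compose[OF linear_compose[OF linear_pair_right linear_Q] linear_proj1]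
  by (simp add: shear_def[abs_def] o_def)

text \<open>horiz shrinks lengths by at most the factor 1 + lam^2: since Q(y,0) lies on the graph
  of L, |y|^2 = |horiz y|^2 + |L (horiz y)|^2.\<close>
lemma horiz_expansion: "norm y \<le> (1 + lam^2) * norm (horiz y)"
proof -
  have "(norm y)^2 = (norm (Q (pair y 0)))^2"
    using norm_split[of "pair y (0::real^'k)"] orth by (simp add: orthogonal_transformation)
  also have "\<dots> = (norm (horiz y))^2 + (norm (L (horiz y)))^2"
    using norm_split[of "Q (pair y 0)"] graph[of y] by (simp add: horiz_def)
  also have "\<dots> \<le> (1 + lam^2) * (norm (horiz y))^2"
    using power_mono[OF L_bound[of "horiz y"]] by (simp add: power_mult_distrib algebra_simps)
  also have "\<dots> \<le> (1 + lam^2)^2 * (norm (horiz y))^2"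
  proof (rule mult_right_mono)
    have "1 \<le> 1 + lam^2" by simp
    then show "1 + lam^2 \<le> (1 + lam^2)^2"
      using mult_left_mono[of 1 "1 + lam^2" "1 + lam^2"] by (simp add: power2_eq_square)
  qed simp
  also have "\<dots> = ((1 + lam^2) * norm (horiz y))^2"
    by (simp add: power_mult_distrib)
  finally show ?thesis
    by (rule power2_le_imp_le) simp
qed

lemma bij_horiz: "bij horiz"
proof -
  have "inj horiz"
  proof (rule injI)
    fix x y assume "horiz x = horiz y"
    then have "horiz (x - y) = 0" using linear_horiz by (simp add: linear_diff)
    then show "x = y" using horiz_expansion[of "x - y"] by simp
  qed
  then show ?thesis using linear_inj_imp_surj[OF linear_horiz] by (simp add: bij_def)
qed

lemma horiz_inv_lipschitz: "norm (inv horiz a - inv horiz b) \<le> (1 + lam^2) * norm (a - b)"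
proof -
  have "horiz (inv horiz a - inv horiz b) = a - b"
    by (simp add: linear_diff[OF linear_horiz] surj_f_inv_f[OF bij_is_surj[OF bij_horiz]])
  then show ?thesis using horiz_expansion[of "inv horiz a - inv horiz b"] by simp
qed

text \<open>Vertical vectors are mapped almost vertically: Q(0,w) is orthogonal to Q(y,0), which
  lies on the graph of L, and this bounds its horizontal part.\<close>
lemma shear_bound: "norm (shear w) \<le> lam * norm w"
proof -
  define b where "b = shear w"
  define c where "c = proj2 (Q (pair 0 w))"
  obtain y where y: "horiz y = b" using bij_horiz by (metis bij_is_surj surjD)
  have "inner (Q (pair y 0)) (Q (pair 0 w)) = 0"
    using orth unfolding orthogonal_transformation_def by (simp add: inner_split[of "pair y 0"])
  then have "inner b b + inner (L b) c = 0"
    using inner_split[of "Q (pair y 0)" "Q (pair 0 w)"] graph[of y] y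
    by (simp add: horiz_def b_def shear_def c_def)
  then have "(norm b)^2 = - inner (L b) c" by (simp add: power2_norm_eq_inner)
  also have "\<dots> \<le> norm (L b) * norm c"
    by (metis abs_le_iff Cauchy_Schwarz_ineq2 minus_le_iff)
  also have "\<dots> \<le> (lam * norm b) * norm w"
  proof (rule mult_mono[OF L_bound])
    show "norm c \<le> norm w"
      using norm_proj2_le[of "Q (pair 0 w)"] norm_split[of "pair (0::real^'m) w"] orth
      by (simp add: c_def orthogonal_transformation)
  qed (use lam_nonneg in simp_all)
  finally have "norm b * norm b \<le> norm b * (lam * norm w)"
    by (simp add: power2_eq_square mult.assoc mult.left_commute)
  then show ?thesis
    by (cases "norm b = 0") (auto simp: b_def lam_nonneg)
qed


text \<open>The fixed points of graph_solver v z are the solutions of horiz y + shear (v y) = z,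
  i.e. the points y whose tilted graph point Q(y, v y) projects to z.\<close>
definition graph_solver :: "(real^'m \<Rightarrow> real^'k) \<Rightarrow> real^'m \<Rightarrow> real^'m \<Rightarrow> real^'m" where
  "graph_solver v z y = inv horiz (z - shear (v y))"

lemma small_lam_square: "lam \<le> 1/8 \<Longrightarrow> lam^2 \<le> 1/64"
  using power_mono[of lam "1/8" 2] lam_nonneg by (simp add: power2_eq_square)

lemma graph_solver_maps_ball:
  fixes v :: "real^'m \<Rightarrow> real^'k"
  assumes lam8: "lam \<le> 1/8" and r: "0 < r" and v0: "v 0 = 0"
    and vlip: "\<And>y y'. y \<in> ball 0 r \<Longrightarrow> y' \<in> ball 0 r \<Longrightarrow> norm (v y - v y') \<le> lam * norm (y - y')"
    and z: "norm z < 4/5 * r" and y: "y \<in> cball 0 (9/10 * r)"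
  shows "graph_solver v z y \<in> cball 0 (9/10 * r)"
proof -
  have lam2: "lam^2 \<le> 1/64" using lam8 by (rule small_lam_square)
  have yb: "y \<in> ball 0 r" using y r by simp
  have inv0: "inv horiz 0 = 0"
    using bij_horiz linear_0[OF linear_horiz] by (metis bij_inv_eq_iff)
  have shear_v: "norm (shear (v y)) \<le> lam^2 * norm y"
    using shear_bound[of "v y"] vlip[OF yb, of 0] r v0 lam_nonneg
    by (smt (verit) centre_in_ball diff_zero mult_left_mono power2_eq_square mult.assoc)
  have "norm (graph_solver v z y) \<le> (1 + lam^2) * norm (z - shear (v y))"
    using horiz_inv_lipschitz[of "z - shear (v y)" 0] by (simp add: graph_solver_def inv0)
  also have "\<dots> \<le> (1 + lam^2) * (norm z + lam^2 * norm y)"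
    using norm_triangle_ineq4[of z "shear (v y)"] shear_v by (intro mult_left_mono) auto
  also have "\<dots> \<le> 65/64 * (4/5 * r + 1/64 * (9/10 * r))"
    using z y lam2 r by (intro mult_mono add_mono mult_mono') auto
  also have "\<dots> \<le> 9/10 * r" using r by simp
  finally show ?thesis by simp
qed

lemma graph_solver_contraction:
  fixes v :: "real^'m \<Rightarrow> real^'k"
  assumes vlip: "\<And>y y'. y \<in> ball 0 r \<Longrightarrow> y' \<in> ball 0 r \<Longrightarrow> norm (v y - v y') \<le> lam * norm (y - y')"
    and x: "x \<in> ball 0 r" and y: "y \<in> ball 0 r"
  shows "dist (graph_solver v z x) (graph_solver v z y) \<le> ((1 + lam^2) * lam^2) * dist x y"
proof -
  have "dist (graph_solver v z x) (graph_solver v z y) \<le> (1 + lam^2) * norm (shear (v y) - shear (v x))"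
    using horiz_inv_lipschitz[of "z - shear (v x)" "z - shear (v y)"]
    by (simp add: graph_solver_def dist_norm)
  moreover have "norm (shear (v y) - shear (v x)) \<le> lam * norm (v y - v x)"
    using shear_bound[of "v y - v x"] by (simp add: linear_diff[OF linear_shear])
  moreover have "lam * norm (v y - v x) \<le> lam * (lam * norm (y - x))"
    using vlip[OF y x] lam_nonneg by (rule mult_left_mono)
  ultimately have "dist (graph_solver v z x) (graph_solver v z y) \<le> (1 + lam^2) * (lam * (lam * norm (y - x)))"
    by (smt (verit) mult_left_mono zero_le_power2)
  then show ?thesis
    by (simp add: dist_norm norm_minus_commute power2_eq_square mult.assoc)
qed

text \<open>The
  point over z is the fixed point of the contraction graph_solver v z.\<close>
lemma tilted_graph_covers_ball:
  fixes v :: "real^'m \<Rightarrow> real^'k"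
  assumes lam8: "lam \<le> 1/8" and r: "0 < r" and v0: "v 0 = 0"
    and vlip: "\<And>y y'. y \<in> ball 0 r \<Longrightarrow> y' \<in> ball 0 r \<Longrightarrow> norm (v y - v y') \<le> lam * norm (y - y')"
    and z: "norm z < 4/5 * r"
  shows "\<exists>y\<in>ball 0 r. proj1 (Q (pair y (v y))) = z"
proof -
  define S where "S = cball (0::real^'m) (9/10 * r)"
  have SB: "S \<subseteq> ball 0 r" using r by (auto simp: S_def)
  have "\<exists>!y\<in>S. graph_solver v z y = y"
  proof (rule Banach_fix)
    show "complete S" "S \<noteq> {}" using r by (auto simp: S_def complete_eq_closed)
    show "0 \<le> (1 + lam^2) * lam^2" by simp
    show "(1 + lam^2) * lam^2 < 1"
      using mult_mono[of "1 + lam^2" "65/64" "lam^2" "1/64"] small_lam_square[OF lam8] by simp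
    show "graph_solver v z ` S \<subseteq> S"
      using graph_solver_maps_ball[OF lam8 r v0 vlip z] by (auto simp: S_def)
    show "dist (graph_solver v z x) (graph_solver v z y) \<le> ((1 + lam^2) * lam^2) * dist x y"
      if "x \<in> S" "y \<in> S" for x y
      using graph_solver_contraction[OF vlip] that SB by blast
  qed
  then obtain y where y: "y \<in> S" "graph_solver v z y = y" by blast
  then have "horiz y = z - shear (v y)"
    using bij_horiz by (metis graph_solver_def bij_inv_eq_iff)
  moreover have "y \<in> ball 0 r" using y SB by blast
  ultimately show ?thesis by (metis proj1_Q_pair diff_add_cancel)
qed

end

lemma chart_homeomorphism:
  assumes "is_chart V \<psi>"
  shows "homeomorphism V (\<psi> ` V) \<psi> (inv_into V \<psi>)"
proof -
  obtain g where g: "homeomorphism V (\<psi> ` V) \<psi> g"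
    using assms by (auto simp: is_chart_def)
  have inj: "inj_on \<psi> V"
    using g by (metis homeomorphism_def inj_on_inverseI)
  have "inv_into V \<psi> y = g y" if "y \<in> \<psi> ` V" for y
    using that g inv_into_f_f[OF inj] by (auto simp: homeomorphism_def)
  then show ?thesis
    by (intro homeomorphism_cong[OF g]) auto
qed

lemma continuous_from_charts:
  fixes atlas :: "('a::topological_space set \<times> ('a \<Rightarrow> real^'m::finite)) set"
    and h :: "'a \<Rightarrow> 'b::topological_space"
  assumes cover: "\<Union>(fst ` atlas) = UNIV" and charts: "\<forall>c\<in>atlas. is_chart (fst c) (snd c)"
    and cont: "\<forall>c\<in>atlas. continuous_on (snd c ` fst c) (h \<circ> inv_into (fst c) (snd c))"
  shows "continuous_on UNIV h"
proof -
  have "continuous_on (fst c) h" if c: "c \<in> atlas" for c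
  proof -
    have hom: "homeomorphism (fst c) (snd c ` fst c) (snd c) (inv_into (fst c) (snd c))"
      using charts c by (simp add: chart_homeomorphism)
    have "continuous_on (fst c) (snd c)"
      using hom by (simp add: homeomorphism_def)
    from continuous_on_compose[OF this] cont c
    have "continuous_on (fst c) ((h \<circ> inv_into (fst c) (snd c)) \<circ> snd c)" by blast
    then show ?thesis
      by (rule continuous_on_eq) (use hom in \<open>auto simp: homeomorphism_def\<close>)
  qed
  moreover have "open S" if "S \<in> fst ` atlas" for S
    using charts that by (auto simp: is_chart_def)
  ultimately have "continuous_on (\<Union>(fst ` atlas)) h"
    by (intro continuous_on_open_Union) blast+
  with cover show ?thesis by simp
qed

text \<open>Manifolds are locally connected: every point of an open set S has a connected open
  neighbourhood inside S, the preimage under a chart of a small coordinate ball.\<close>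
lemma connected_nbhd_from_charts:
  fixes atlas :: "('a::topological_space set \<times> ('a \<Rightarrow> real^'m::finite)) set" and y :: 'a
  assumes cover: "\<Union>(fst ` atlas) = UNIV" and charts: "\<forall>c\<in>atlas. is_chart (fst c) (snd c)"
    and S: "open S" "y \<in> S"
  shows "\<exists>W. open W \<and> connected W \<and> y \<in> W \<and> W \<subseteq> S"
proof -
  obtain c where c: "c \<in> atlas" "y \<in> fst c" using cover by blast
  define V where "V = fst c"
  define \<psi> where "\<psi> = snd c"
  have V: "open V" "open (\<psi> ` V)" using charts c by (auto simp: is_chart_def V_def \<psi>_def)
  have hom: "homeomorphism V (\<psi> ` V) \<psi> (inv_into V \<psi>)"
    using charts c by (simp add: chart_homeomorphism V_def \<psi>_def)
  have inv_psi: "inv_into V \<psi> (\<psi> s) = s" if "s \<in> V" for s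
    using hom that by (simp add: homeomorphism_def)
  have "openin (top_of_set (\<psi> ` V)) (\<psi> ` (V \<inter> S))"
    by (rule homeomorphism_imp_open_map[OF hom]) (simp add: S openin_open_Int)
  then have "open (\<psi> ` (V \<inter> S))" using V openin_open_trans by blast
  moreover have "\<psi> y \<in> \<psi> ` (V \<inter> S)" using c S by (simp add: V_def)
  ultimately obtain e where e: "e > 0" "ball (\<psi> y) e \<subseteq> \<psi> ` (V \<inter> S)"
    using open_contains_ball by blast
  define W where "W = inv_into V \<psi> ` ball (\<psi> y) e"
  have ball_sub: "ball (\<psi> y) e \<subseteq> \<psi> ` V" using e by blast
  have "openin (top_of_set V) W"
    unfolding W_def
    by (rule homeomorphism_imp_open_map[OF homeomorphism_symD[OF hom]])
       (simp add: ball_sub open_subset)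
  then have "open W" using V openin_open_trans by blast
  moreover have "connected W"
  proof -
    have "continuous_on (ball (\<psi> y) e) (inv_into V \<psi>)"
      using hom ball_sub by (meson continuous_on_subset homeomorphism_def)
    then show ?thesis unfolding W_def by (rule connected_continuous_image) simp
  qed
  moreover have "y \<in> W"
    using c e(1) inv_psi[of y] unfolding W_def V_def by (metis centre_in_ball imageI)
  moreover have "W \<subseteq> S"
    using e(2) inv_psi unfolding W_def by auto
  ultimately show ?thesis by blast
qed

lemma open_component_from_charts:
  fixes atlas :: "('a::topological_space set \<times> ('a \<Rightarrow> real^'m::finite)) set"
    and S :: "'a set"
  assumes cover: "\<Union>(fst ` atlas) = UNIV" and charts: "\<forall>c\<in>atlas. is_chart (fst c) (snd c)"
    and S: "open S"
  shows "open (connected_component_set S x)"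
proof (subst open_subopen, intro ballI)
  fix y assume y: "y \<in> connected_component_set S x"
  then have "y \<in> S" using connected_component_subset by blast
  then obtain W where W: "open W" "connected W" "y \<in> W" "W \<subseteq> S"
    using connected_nbhd_from_charts[OF cover charts S] by blast
  then have "W \<subseteq> connected_component_set S x"
    using connected_component_maximal connected_component_eq[OF y] by metis
  with W show "\<exists>T. open T \<and> y \<in> T \<and> T \<subseteq> connected_component_set S x" by blast
qed

lemma immersion_chart_derivative:
  assumes "immersion atlas f" "c \<in> atlas" "x \<in> snd c ` fst c"
  shows "((f \<circ> inv_into (fst c) (snd c)) has_derivative
           frechet_derivative (f \<circ> inv_into (fst c) (snd c)) (at x)) (at x)"
  using assms unfolding immersion_def C1_on_def
  by (metis differentiableI frechet_derivative_works)

lemma bounded_linear_proj1: "bounded_linear proj1"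
  using linear_proj1 linear_conv_bounded_linear by blast

lemma bounded_linear_proj2: "bounded_linear proj2"
  using linear_proj2 linear_conv_bounded_linear by blast

lemma iso_inv_has_derivative:
  assumes "(h has_derivative D) F"
  shows "((\<lambda>z. iso_inv R T (h z)) has_derivative (\<lambda>w. transpose R *v D w)) F"
proof -
  have "bounded_linear (\<lambda>y. transpose R *v y)"
    using linear_conv_bounded_linear matrix_vector_mul_linear by blast
  moreover have "((\<lambda>z. h z - T) has_derivative D) F"
    using has_derivative_diff[OF assms has_derivative_const] by simp
  ultimately show ?thesis
    unfolding iso_inv_def by (rule bounded_linear.has_derivative)
qed

lemma phi_Ucomp_in_ball: "p \<in> Ucomp f R T r q \<Longrightarrow> phi f R T p \<in> ball 0 r"
  using connected_component_subset unfolding Ucomp_def by blast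

text \<open>U_{r,q} is open: phi_q is continuous (it is C^1 in charts) and M is locally connected.\<close>
lemma Ucomp_open:
  fixes atlas :: "('a::{t2_space,second_countable_topology} set \<times> ('a \<Rightarrow> real^'m::finite)) set"
    and f :: "'a \<Rightarrow> real^('m + 'k::finite)"
  assumes M: "C1_manifold atlas" and imm: "immersion atlas f"
  shows "open (Ucomp f R T r q)"
proof -
  have cover: "\<Union>(fst ` atlas) = UNIV" and charts: "\<forall>c\<in>atlas. is_chart (fst c) (snd c)"
    using M by (auto simp: C1_manifold_def)
  have "continuous_on (snd c ` fst c) (phi f R T \<circ> inv_into (fst c) (snd c))" if c: "c \<in> atlas" for c
  proof (rule has_derivative_continuous_on)
    fix x assume "x \<in> snd c ` fst c"
    from bounded_linear.has_derivative[OF bounded_linear_proj1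
           iso_inv_has_derivative[OF immersion_chart_derivative[OF imm c this]]]
    show "((phi f R T \<circ> inv_into (fst c) (snd c)) has_derivative
        (\<lambda>w. proj1 (transpose R *v frechet_derivative (f \<circ> inv_into (fst c) (snd c)) (at x) w)))
        (at x within snd c ` fst c)"
      by (auto simp: phi_def o_def intro: has_derivative_at_withinI)
  qed
  then have "continuous_on UNIV (phi f R T)"
    using continuous_from_charts[OF cover charts] by blast
  then have "open (phi f R T -` ball 0 r)"
    using open_vimage by blast
  then show ?thesis
    unfolding Ucomp_def by (rule open_component_from_charts[OF cover charts])
qed

lemma graph_valued_map_derivative:
  fixes h :: "'b::real_normed_vector \<Rightarrow> real^('m::finite + 'k::finite)" and u :: "real^'m \<Rightarrow> real^'k"
  assumes h: "(h has_derivative D) (at x)" and N: "open N" "x \<in> N"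
    and on_graph: "\<And>z. z \<in> N \<Longrightarrow> proj2 (h z) = u (proj1 (h z))"
    and u: "(u has_derivative L) (at (proj1 (h x)))"
  shows "proj2 (D w) = L (proj1 (D w))"
proof -
  have d1: "((\<lambda>z. proj1 (h z)) has_derivative (\<lambda>w. proj1 (D w))) (at x)"
    by (rule bounded_linear.has_derivative[OF bounded_linear_proj1 h])
  have d2: "((\<lambda>z. proj2 (h z)) has_derivative (\<lambda>w. proj2 (D w))) (at x)"
    by (rule bounded_linear.has_derivative[OF bounded_linear_proj2 h])
  have "((u \<circ> (\<lambda>z. proj1 (h z))) has_derivative (L \<circ> (\<lambda>w. proj1 (D w)))) (at x)"
    by (rule diff_chain_at[OF d1 u])
  then have "((\<lambda>z. proj2 (h z)) has_derivative (L \<circ> (\<lambda>w. proj1 (D w)))) (at x)"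
    by (rule has_derivative_transform_within_open[OF _ N]) (simp add: on_graph)
  from has_derivative_unique[OF d2 this] show ?thesis
    by (metis comp_apply)
qed

lemma tau_in_chart:
  assumes M: "C1_manifold atlas"
  obtains c where "c \<in> atlas" "p \<in> fst c"
    and "tau atlas f p = range (frechet_derivative (f \<circ> inv_into (fst c) (snd c)) (at (snd c p)))"
proof -
  have "p \<in> \<Union>(fst ` atlas)"
    using M by (simp add: C1_manifold_def)
  then have "\<exists>c. c \<in> atlas \<and> p \<in> fst c" by blast
  from someI_ex[OF this] that show ?thesis
    unfolding tau_def Let_def by blast
qed

text \<open>Tangent vectors at p in U_{r,q}, written in the frame of A_q, lie in the graph of Du at
  phi_q p: near p the immersion itself runs in the graph of u.\<close>
lemma tangent_in_graph:
  fixes atlas :: "('a::{t2_space,second_countable_topology} set \<times> ('a \<Rightarrow> real^'m::finite)) set"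
    and f :: "'a \<Rightarrow> real^('m + 'k::finite)" and u :: "real^'m \<Rightarrow> real^'k"
  assumes M: "C1_manifold atlas" and imm: "immersion atlas f"
    and u: "u differentiable_on ball 0 r"
    and img: "iso_inv R T ` f ` Ucomp f R T r q = {y. proj1 y \<in> ball 0 r \<and> proj2 y = u (proj1 y)}"
    and p: "p \<in> Ucomp f R T r q"
    and t: "t \<in> tau atlas f p"
  shows "proj2 (transpose R *v t) = frechet_derivative u (at (phi f R T p)) (proj1 (transpose R *v t))"
proof -
  obtain c where c: "c \<in> atlas" "p \<in> fst c"
    and tau: "tau atlas f p = range (frechet_derivative (f \<circ> inv_into (fst c) (snd c)) (at (snd c p)))"
    using tau_in_chart[OF M] by blast
  define V where "V = fst c"
  define \<psi> where "\<psi> = snd c"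
  define D where "D = frechet_derivative (f \<circ> inv_into V \<psi>) (at (\<psi> p))"
  define h where "h z = iso_inv R T (f (inv_into V \<psi> z))" for z
  have V: "open (\<psi> ` V)" "p \<in> V" using M c by (auto simp: C1_manifold_def is_chart_def V_def \<psi>_def)
  have hom: "homeomorphism V (\<psi> ` V) \<psi> (inv_into V \<psi>)"
    using M c by (simp add: C1_manifold_def chart_homeomorphism V_def \<psi>_def)
  have inv_psi: "inv_into V \<psi> (\<psi> s) = s" if "s \<in> V" for s
    using hom that by (simp add: homeomorphism_def)
  obtain w where w: "t = D w" using t tau by (auto simp: D_def V_def \<psi>_def)
  have "((f \<circ> inv_into V \<psi>) has_derivative D) (at (\<psi> p))"
    using immersion_chart_derivative[OF imm c(1)] V by (simp add: D_def V_def \<psi>_def)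
  from iso_inv_has_derivative[OF this[unfolded o_def], of R T]
  have h_deriv: "(h has_derivative (\<lambda>w. transpose R *v D w)) (at (\<psi> p))"
    unfolding h_def[abs_def] .
  define N where "N = \<psi> ` (V \<inter> Ucomp f R T r q)"
  have "openin (top_of_set (\<psi> ` V)) N"
    unfolding N_def
    by (rule homeomorphism_imp_open_map[OF hom]) (simp add: Ucomp_open[OF M imm] openin_open_Int)
  then have N: "open N" "\<psi> p \<in> N" using V p openin_open_trans by (auto simp: N_def)
  have "proj2 (h z) = u (proj1 (h z))" if "z \<in> N" for z
  proof -
    obtain s where s: "s \<in> V" "s \<in> Ucomp f R T r q" "z = \<psi> s" using \<open>z \<in> N\<close> N_def by blast
    then have "h z \<in> iso_inv R T ` f ` Ucomp f R T r q" by (simp add: h_def inv_psi)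
    then show ?thesis unfolding img by simp
  qed
  moreover have "proj1 (h (\<psi> p)) = phi f R T p"
    using V by (simp add: h_def inv_psi phi_def)
  moreover have "phi f R T p \<in> ball 0 r"
    using p by (rule phi_Ucomp_in_ball)
  then have "(u has_derivative frechet_derivative u (at (phi f R T p))) (at (phi f R T p))"
    using u by (simp add: differentiable_on_eq_differentiable_at frechet_derivative_works[symmetric])
  ultimately show ?thesis
    using graph_valued_map_derivative[OF h_deriv N] w by metis
qed

lemma orthogonal_matrix_transformation:
  fixes A :: "real^'n::finite^'n"
  assumes "orthogonal_matrix A"
  shows "orthogonal_transformation (\<lambda>x. A *v x)"
  using assms orthogonal_transformation_matrix[of "\<lambda>x. A *v x"]
  by (simp add: matrix_vector_mul_linear matrix_of_matrix_vector_mul)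

text \<open>Comparing the frames of A_q and A_p: the rotation R^T R' maps R^m x {0}, which A_p sends
  onto the tangent plane at p, onto the graph of Du at phi_q p.\<close>
lemma admissible_tilted_frame:
  fixes atlas :: "('a::{t2_space,second_countable_topology} set \<times> ('a \<Rightarrow> real^'m::finite)) set"
    and f :: "'a \<Rightarrow> real^('m + 'k::finite)" and u :: "real^'m \<Rightarrow> real^'k"
  assumes M: "C1_manifold atlas" and imm: "immersion atlas f"
    and R: "orthogonal_matrix R"
    and u: "u differentiable_on ball 0 r"
    and img: "iso_inv R T ` f ` Ucomp f R T r q = {y. proj1 y \<in> ball 0 r \<and> proj2 y = u (proj1 y)}"
    and p: "p \<in> Ucomp f R T r q"
    and adp: "admissible atlas f p R' T'"
    and frob_u: "frob (frechet_derivative u (at (phi f R T p))) \<le> lam"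
  shows "tilted_frame (\<lambda>x. transpose R *v (R' *v x)) (frechet_derivative u (at (phi f R T p))) lam"
proof (rule tilted_frame.intro)
  have R': "orthogonal_matrix R'" using adp by (simp add: admissible_def SO_def)
  have "orthogonal_matrix (transpose R)" using R by simp
  from orthogonal_transformation_compose[OF orthogonal_matrix_transformation[OF this]
         orthogonal_matrix_transformation[OF R']]
  show "orthogonal_transformation (\<lambda>x. transpose R *v (R' *v x))"
    unfolding o_def .
  have "phi f R T p \<in> ball 0 r"
    using p by (rule phi_Ucomp_in_ball)
  then show "linear (frechet_derivative u (at (phi f R T p)))"
    using u by (simp add: differentiable_on_eq_differentiable_at linear_frechet_derivative)
  show "frob (frechet_derivative u (at (phi f R T p))) \<le> lam" by (rule frob_u)
  fix y :: "real^'m"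
  have "R' *v pair y 0 + T' \<in> (\<lambda>v. f p + v) ` tau atlas f p"
    using adp pair_in_flat unfolding admissible_def by blast
  then have "R' *v pair y 0 \<in> tau atlas f p"
    using adp by (auto simp: admissible_def)
  from tangent_in_graph[OF M imm u img p this]
  show "proj2 (transpose R *v (R' *v pair y 0)) =
    frechet_derivative u (at (phi f R T p)) (proj1 (transpose R *v (R' *v pair y 0)))" .
qed

lemma admissible_graph_origin:
  assumes adp: "admissible atlas f p R' T'" and r: "0 < r"
    and img: "iso_inv R' T' ` f ` Ucomp f R' T' r p = {y. proj1 y \<in> ball 0 r \<and> proj2 y = v (proj1 y)}"
  shows "v 0 = 0"
proof -
  have T': "T' = f p" using adp by (simp add: admissible_def)
  then have "p \<in> Ucomp f R' T' r p"
    using r by (simp add: Ucomp_def phi_def iso_inv_def)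
  then have "iso_inv R' T' (f p) \<in> {y. proj1 y \<in> ball 0 r \<and> proj2 y = v (proj1 y)}"
    unfolding img[symmetric] by blast
  then show ?thesis using T' by (simp add: iso_inv_def)
qed

lemma phi_change_of_frame:
  assumes R': "orthogonal_matrix R'" and T': "T' = f p"
  shows "phi f R T s = proj1 (transpose R *v (R' *v iso_inv R' T' (f s))) + phi f R T p"
proof -
  have "R' *v iso_inv R' T' (f s) = f s - f p"
    using R' T' unfolding orthogonal_matrix_def iso_inv_def
    by (metis matrix_vector_mul_assoc matrix_vector_mul_lid)
  then have "transpose R *v (R' *v iso_inv R' T' (f s)) = iso_inv R T (f s) - iso_inv R T (f p)"
    by (simp add: iso_inv_def matrix_vector_mult_diff_distrib)
  then show ?thesis
    by (simp add: phi_def linear_diff[OF linear_proj1])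
qed

lemma graph_point_in_Ucomp:
  assumes adp: "admissible atlas f p R' T'"
    and img: "iso_inv R' T' ` f ` Ucomp f R' T' r p = {y. proj1 y \<in> ball 0 r \<and> proj2 y = v (proj1 y)}"
    and y: "y \<in> ball 0 r"
  shows "proj1 (transpose R *v (R' *v pair y (v y))) + phi f R T p \<in> phi f R T ` Ucomp f R' T' r p"
proof -
  have "pair y (v y) \<in> {y. proj1 y \<in> ball 0 r \<and> proj2 y = v (proj1 y)}" using y by simp
  then obtain s where s: "s \<in> Ucomp f R' T' r p" and sy: "iso_inv R' T' (f s) = pair y (v y)"
    unfolding img[symmetric] image_image by (metis (no_types, lifting) imageE)
  have R': "orthogonal_matrix R'" and T': "T' = f p"
    using adp by (simp_all add: admissible_def SO_def)
  have "phi f R T s = proj1 (transpose R *v (R' *v pair y (v y))) + phi f R T p"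
    using phi_change_of_frame[of R' T' f p R T s, OF R' T'] unfolding sy .
  from this[symmetric] s show ?thesis by (rule image_eqI)
qed

lemma r_lambda_graph:
  assumes "r_lambda_immersion atlas f r lam" and "admissible atlas f q R T"
  obtains u :: "real^'m::finite \<Rightarrow> real^'k::finite"
  where "u differentiable_on ball 0 r"
    and "\<And>x. x \<in> ball 0 r \<Longrightarrow> frob (frechet_derivative u (at x)) \<le> lam"
    and "iso_inv R T ` f ` Ucomp f R T r q = {y. proj1 y \<in> ball 0 r \<and> proj2 y = u (proj1 y)}"
proof -
  obtain u :: "real^'m \<Rightarrow> real^'k" where "u differentiable_on ball 0 r"
    and "\<forall>x\<in>ball 0 r. frob (frechet_derivative u (at x)) \<le> lam"
    and "iso_inv R T ` f ` Ucomp f R T r q = {y. proj1 y \<in> ball 0 r \<and> proj2 y = u (proj1 y)}"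
    using assms unfolding r_lambda_immersion_def by blast
  then show ?thesis using that by blast
qed

text \<open>The smallness hypothesis on lam enters the argument only through lam <= 1/8.\<close>
lemma lam_le_one_eighth:
  assumes "lam \<le> 1 / (8 * sqrt (real CARD('m::finite)))"
  shows "lam \<le> 1/8"
proof -
  have "1 \<le> sqrt (real CARD('m))" by simp
  then have "1 / (8 * sqrt (real CARD('m))) \<le> 1/8" by (simp add: field_simps)
  then show ?thesis using assms by linarith
qed

theorem mainTheorem4:
  fixes atlas :: "('a::{t2_space,second_countable_topology} set \<times> ('a \<Rightarrow> real^'m::finite)) set"
    and f :: "'a \<Rightarrow> real^('m + 'k::finite)"
    and r lam :: real
    and q :: 'a
    and R :: "real^('m+'k)^('m+'k)" and T :: "real^('m+'k)"
  assumes "C1_manifold atlas"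
    and "r_lambda_immersion atlas f r lam"
    and "r > 0" and "0 < lam" and "lam \<le> 1 / (8 * sqrt (real CARD('m)))"
    and "admissible atlas f q R T"
  shows "\<forall>p \<in> Ucomp f R T r q. \<forall>R' T'. admissible atlas f p R' T' \<longrightarrow>
           ball (phi f R T p) (4/5 * r) \<subseteq> phi f R T ` Ucomp f R' T' r p"
proof (intro ballI allI impI subsetI)
  note M = assms(1) and rl = assms(2) and r = assms(3) and adq = assms(6)
  fix p R' T' z
  assume p: "p \<in> Ucomp f R T r q" and adp: "admissible atlas f p R' T'"
    and z: "z \<in> ball (phi f R T p) (4/5 * r)"
  have imm: "immersion atlas f" using rl by (simp add: r_lambda_immersion_def)
  have R: "orthogonal_matrix R" using adq by (simp add: admissible_def SO_def)
  obtain u :: "real^'m \<Rightarrow> real^'k" where u: "u differentiable_on ball 0 r"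
    and frob_u: "\<And>x. x \<in> ball 0 r \<Longrightarrow> frob (frechet_derivative u (at x)) \<le> lam"
    and img_u: "iso_inv R T ` f ` Ucomp f R T r q = {y. proj1 y \<in> ball 0 r \<and> proj2 y = u (proj1 y)}"
    using r_lambda_graph[OF rl adq] by blast
  obtain v :: "real^'m \<Rightarrow> real^'k" where v: "v differentiable_on ball 0 r"
    and frob_v: "\<And>x. x \<in> ball 0 r \<Longrightarrow> frob (frechet_derivative v (at x)) \<le> lam"
    and img_v: "iso_inv R' T' ` f ` Ucomp f R' T' r p = {y. proj1 y \<in> ball 0 r \<and> proj2 y = v (proj1 y)}"
    using r_lambda_graph[OF rl adp] by blast
  from admissible_tilted_frame[OF M imm R u img_u p adp frob_u[OF phi_Ucomp_in_ball[OF p]]]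
  interpret tilted_frame "\<lambda>x. transpose R *v (R' *v x)" "frechet_derivative u (at (phi f R T p))" lam .
  have "norm (z - phi f R T p) < 4/5 * r"
    using z by (simp add: dist_norm norm_minus_commute)
  then obtain y where "y \<in> ball 0 r"
    and "proj1 (transpose R *v (R' *v pair y (v y))) = z - phi f R T p"
    using tilted_graph_covers_ball[OF lam_le_one_eighth[OF assms(5)] r
          admissible_graph_origin[OF adp r img_v]
          frob_derivative_lipschitz[OF open_ball convex_ball v frob_v]] by blast
  then show "z \<in> phi f R T ` Ucomp f R' T' r p"
    using graph_point_in_Ucomp[OF adp img_v, of y R T] by (metis diff_add_cancel)
qed

end
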